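(* Let $L$ be a countable C-lattice domain in which every element is a join of principal elements. If $L$ is pseudo-Dedekind and Prüfer, then $L$ has finite character.
   Context: A multiplicative lattice is a complete lattice $(L,\le)$ with bottom $0$ and top $1$ which is also a commutative monoid with identity $1$ such that $a(\bigvee_\alpha b_\alpha)=\bigvee_\alpha(ab_\alpha)$ for all $a,b_\alpha\in L$. For $x,y\in L$, $(y:x)=\bigvee\{a\in L: ax\le y\}$. An element $c$ is compact if $c\le\bigvee S$ implies $c\le\bigvee T$ for some finite $T\subseteq S$. A C-lattice is a multiplicative lattice in which $1$ is compact, the product of two compact elements is compact, and every element is a join of compact elements. A proper element $p\ne1$ is prime if $xy\le p$ implies $x\le p$ or $y\le p$; maximal elements are maximal in $L\setminus\{1\}$; $L$ is a domain if $0$ is prime. An element $x$ is principal if $y\wedge zx=((y:x)\wedge z)x$ and $y\vee(z:x)=((yx\vee z):x)$ for all $y,z\in L$. $L$ is pseudo-Dedekind if $(x:a)$ is principal whenever $x,a\in L$ and $x$ is principal; $L$ is Prüfer if every compact element is principal; $L$ has finite character if every nonzero element is below only finitely many maximal elements. *)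

theory Defs
  imports Main "HOL-Library.Countable_Set"
begin

text \<open>A multiplicative lattice: the ambient type is a complete lattice (bottom 0 = bot,
top 1 = top) and mult is a commutative monoid operation with identity top that
distributes over arbitrary joins.\<close>

definition mult_lattice :: "('a::complete_lattice \<Rightarrow> 'a \<Rightarrow> 'a) \<Rightarrow> bool" where
  "mult_lattice mult \<longleftrightarrow>
     (\<forall>a b c. mult (mult a b) c = mult a (mult b c)) \<and>
     (\<forall>a b. mult a b = mult b a) \<and>
     (\<forall>a. mult a top = a) \<and>
     (\<forall>a B. mult a (Sup B) = Sup (mult a ` B))"

definition res :: "('a::complete_lattice \<Rightarrow> 'a \<Rightarrow> 'a) \<Rightarrow> 'a \<Rightarrow> 'a \<Rightarrow> 'a" where
  "res mult y x = Sup {a. mult a x \<le> y}"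

definition lat_compact :: "'a::complete_lattice \<Rightarrow> bool" where
  "lat_compact c \<longleftrightarrow> (\<forall>S. c \<le> Sup S \<longrightarrow> (\<exists>T. T \<subseteq> S \<and> finite T \<and> c \<le> Sup T))"

definition C_lattice :: "('a::complete_lattice \<Rightarrow> 'a \<Rightarrow> 'a) \<Rightarrow> bool" where
  "C_lattice mult \<longleftrightarrow> mult_lattice mult \<and> lat_compact (top::'a) \<and>
     (\<forall>a b. lat_compact a \<and> lat_compact b \<longrightarrow> lat_compact (mult a b)) \<and>
     (\<forall>x::'a. \<exists>S. (\<forall>s\<in>S. lat_compact s) \<and> x = Sup S)"

definition lat_prime :: "('a::complete_lattice \<Rightarrow> 'a \<Rightarrow> 'a) \<Rightarrow> 'a \<Rightarrow> bool" where
  "lat_prime mult p \<longleftrightarrow> p \<noteq> top \<and> (\<forall>x y. mult x y \<le> p \<longrightarrow> x \<le> p \<or> y \<le> p)"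

definition lat_maximal :: "'a::complete_lattice \<Rightarrow> bool" where
  "lat_maximal m \<longleftrightarrow> m \<noteq> top \<and> (\<forall>x. m \<le> x \<and> x \<noteq> top \<longrightarrow> x = m)"

definition lat_domain :: "('a::complete_lattice \<Rightarrow> 'a \<Rightarrow> 'a) \<Rightarrow> bool" where
  "lat_domain mult \<longleftrightarrow> lat_prime mult bot"

definition lat_principal :: "('a::complete_lattice \<Rightarrow> 'a \<Rightarrow> 'a) \<Rightarrow> 'a \<Rightarrow> bool" where
  "lat_principal mult x \<longleftrightarrow>
     (\<forall>y z. inf y (mult z x) = mult (inf (res mult y x) z) x \<and>
            sup y (res mult z x) = res mult (sup (mult y x) z) x)"

definition pseudo_Dedekind :: "('a::complete_lattice \<Rightarrow> 'a \<Rightarrow> 'a) \<Rightarrow> bool" where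
  "pseudo_Dedekind mult \<longleftrightarrow>
     (\<forall>x a. lat_principal mult x \<longrightarrow> lat_principal mult (res mult x a))"

definition Pruefer :: "('a::complete_lattice \<Rightarrow> 'a \<Rightarrow> 'a) \<Rightarrow> bool" where
  "Pruefer mult \<longleftrightarrow> (\<forall>c. lat_compact c \<longrightarrow> lat_principal mult c)"

definition finite_character :: "'a::complete_lattice itself \<Rightarrow> bool" where
  "finite_character _ \<longleftrightarrow> (\<forall>x::'a. x \<noteq> bot \<longrightarrow> finite {m. lat_maximal m \<and> x \<le> m})"

end

theory Submission
  imports Defs
begin

(*
  Fix a nonzero principal element p below the given element; it suffices that only finitely
  many maximal elements lie above p.  From infinitely many of them one builds elements a k and
  tests phi k with a k not below phi k, but a j below phi k for j ~= k; then S |-> Sup (a ` S)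
  embeds the power set of the naturals into the countable lattice.

  Either some infinite set Z of these maximal elements is such that every compact element
  below a member of Z lies below all but finitely many members; then a finite meet of compact
  separators (maximal elements are prime) isolates each m in Z, and one takes phi k = m k.
  Or a greedy choice yields maximal elements m k and compact s k <= m k with s k not below
  m j for j ~= k; then a k = (p : s k) and phi k = Sup {(p : t) | t not below m k}.  Here a k is
  not below phi k because (p : s) is principal (pseudo-Dedekind), hence compact, and p v s is
  principal (Pruefer) with p = (p : s)(p v s), so (p : s) t <= p forces t <= p v s <= m.
*)

lemma uncountable_UNIV_nat_set: "uncountable (UNIV :: nat set set)"
proof
  assume "countable (UNIV :: nat set set)"
  then obtain g :: "nat set \<Rightarrow> nat" where "inj g"
    by (auto simp: countable_def)
  then have "surj (inv g)"
    by (rule inj_imp_surj_inv)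
  then show False
    using Cantors_theorem[of "UNIV :: nat set"] by simp
qed

lemma separated_sequence_imp_uncountable:
  fixes a \<phi> :: "nat \<Rightarrow> 'a::complete_lattice"
  assumes not_le: "\<And>k. \<not> a k \<le> \<phi> k" and le: "\<And>j k. j \<noteq> k \<Longrightarrow> a j \<le> \<phi> k"
  shows "uncountable (UNIV :: 'a set)"
proof
  assume countable: "countable (UNIV :: 'a set)"
  define h where "h S = Sup (a ` S)" for S
  have test: "h S \<le> \<phi> k \<longleftrightarrow> k \<notin> S" for S k
  proof
    show "h S \<le> \<phi> k \<Longrightarrow> k \<notin> S"
      using not_le by (auto simp: h_def dest: Sup_le_iff[THEN iffD1])
    show "k \<notin> S \<Longrightarrow> h S \<le> \<phi> k"
      by (auto simp: h_def intro!: Sup_least le)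
  qed
  have "inj h"
  proof (rule injI)
    fix S S' assume "h S = h S'"
    then have "k \<in> S \<longleftrightarrow> k \<in> S'" for k
      using test by metis
    then show "S = S'" by blast
  qed
  then have "countable (UNIV :: nat set set)"
    using countable_image_inj_on[of h UNIV] countable_subset[OF subset_UNIV countable] by blast
  then show False
    using uncountable_UNIV_nat_set by contradiction
qed

lemma greedy_separated_sequence:
  fixes Y :: "'a set" and Q :: "'b \<Rightarrow> 'a \<Rightarrow> bool"
  assumes "infinite Y"
    and step: "\<And>Z. Z \<subseteq> Y \<Longrightarrow> infinite Z \<Longrightarrow> \<exists>m\<in>Z. \<exists>s. Q s m \<and> infinite {m'\<in>Z. \<not> Q s m'}"
  shows "\<exists>(m :: nat \<Rightarrow> 'a) (s :: nat \<Rightarrow> 'b). range m \<subseteq> Y \<and> (\<forall>k. Q (s k) (m k))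
           \<and> (\<forall>k j. k < j \<longrightarrow> \<not> Q (s k) (m j))"
proof -
  define good where "good Z ms \<longleftrightarrow> fst ms \<in> Z \<and> Q (snd ms) (fst ms)
    \<and> infinite {m'\<in>Z. \<not> Q (snd ms) m'}" for Z ms
  define pick where "pick Z = (SOME ms. good Z ms)" for Z
  have pick: "good Z (pick Z)" if Z: "Z \<subseteq> Y" "infinite Z" for Z
  proof -
    obtain m s where "m \<in> Z" "Q s m" "infinite {m'\<in>Z. \<not> Q s m'}"
      using step[OF Z] by blast
    then have "good Z (m, s)"
      by (simp add: good_def)
    then show ?thesis
      unfolding pick_def by (rule someI)
  qed
  define rest where "rest Z = {m'\<in>Z. \<not> Q (snd (pick Z)) m'}" for Z
  define Zs where "Zs k = (rest ^^ k) Y" for k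
  have Zs_Suc: "Zs (Suc k) = rest (Zs k)" for k
    by (simp add: Zs_def)
  have Zs: "Zs k \<subseteq> Y \<and> infinite (Zs k)" for k
  proof (induction k)
    case 0
    then show ?case using \<open>infinite Y\<close> by (simp add: Zs_def)
  next
    case (Suc k)
    then have "good (Zs k) (pick (Zs k))" by (intro pick) auto
    with Suc show ?case by (auto simp: Zs_Suc rest_def good_def)
  qed
  have "Zs (Suc k) \<subseteq> Zs k" for k
    by (auto simp: Zs_Suc rest_def)
  then have Zs_antimono: "Zs j \<subseteq> Zs (Suc k)" if "k < j" for k j
    using lift_Suc_antimono_le[of Zs] that by (metis Suc_leI)
  have "range (\<lambda>k. fst (pick (Zs k))) \<subseteq> Y \<and> (\<forall>k. Q (snd (pick (Zs k))) (fst (pick (Zs k))))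
    \<and> (\<forall>k j. k < j \<longrightarrow> \<not> Q (snd (pick (Zs k))) (fst (pick (Zs j))))"
  proof (intro conjI allI impI)
    show "range (\<lambda>k. fst (pick (Zs k))) \<subseteq> Y" "Q (snd (pick (Zs k))) (fst (pick (Zs k)))" for k
      using pick Zs by (auto simp: good_def)
    show "\<not> Q (snd (pick (Zs k))) (fst (pick (Zs j)))" if "k < j" for k j
    proof -
      have "fst (pick (Zs j)) \<in> Zs (Suc k)"
        using Zs_antimono[OF that] pick[of "Zs j"] Zs by (auto simp: good_def)
      then show ?thesis by (simp add: Zs_Suc rest_def)
    qed
  qed
  then show ?thesis
    by (intro exI)
qed

lemma lat_compact_bot: "lat_compact bot"
  unfolding lat_compact_def by auto

lemma lat_compact_sup:
  assumes "lat_compact a" and "lat_compact b"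
  shows "lat_compact (sup a b)"
  unfolding lat_compact_def
proof (intro allI impI)
  fix S assume "sup a b \<le> Sup S"
  then obtain Ta Tb where "Ta \<subseteq> S" "finite Ta" "a \<le> Sup Ta" "Tb \<subseteq> S" "finite Tb" "b \<le> Sup Tb"
    using assms unfolding lat_compact_def by (meson le_sup_iff)
  then have "Ta \<union> Tb \<subseteq> S \<and> finite (Ta \<union> Tb) \<and> sup a b \<le> Sup (Ta \<union> Tb)"
    by (auto simp: Sup_union_distrib intro: le_supI1 le_supI2)
  then show "\<exists>T\<subseteq>S. finite T \<and> sup a b \<le> Sup T" by blast
qed

lemma lat_compact_Sup_finite:
  "finite F \<Longrightarrow> (\<And>t. t \<in> F \<Longrightarrow> lat_compact t) \<Longrightarrow> lat_compact (Sup F)"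
  by (induction F rule: finite_induct) (auto simp: lat_compact_bot lat_compact_sup)

lemma lat_compact_le_Sup_finite_subsets:
  assumes "lat_compact c" and "c \<le> Sup (f ` {F. F \<subseteq> S \<and> finite F})"
    and mono: "\<And>F G. F \<subseteq> G \<Longrightarrow> f F \<le> f G"
  obtains F where "F \<subseteq> S" "finite F" "c \<le> f F"
proof -
  obtain R where R: "R \<subseteq> f ` {F. F \<subseteq> S \<and> finite F}" "finite R" "c \<le> Sup R"
    using assms(1,2) unfolding lat_compact_def by blast
  then obtain Fs where Fs: "Fs \<subseteq> {F. F \<subseteq> S \<and> finite F}" "finite Fs" "c \<le> Sup (f ` Fs)"
    using finite_subset_image[OF R(2,1)] by blast
  have "Sup (f ` Fs) \<le> f (\<Union>Fs)"
    by (auto intro!: Sup_least mono)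
  with Fs show thesis
    by (intro that[of "\<Union>Fs"]) auto
qed

locale multiplicative_lattice =
  fixes mult :: "'a::complete_lattice \<Rightarrow> 'a \<Rightarrow> 'a"
  assumes mult_lattice: "mult_lattice mult"
begin

lemma mult_commute: "mult a b = mult b a"
  using mult_lattice unfolding mult_lattice_def by blast

lemma mult_top [simp]: "mult a top = a"
  using mult_lattice unfolding mult_lattice_def by blast

lemma top_mult [simp]: "mult top a = a"
  using mult_top mult_commute by metis

lemma mult_Sup: "mult a (Sup B) = Sup (mult a ` B)"
  using mult_lattice unfolding mult_lattice_def by blast

lemma mult_sup: "mult a (sup b c) = sup (mult a b) (mult a c)"
  using mult_Sup[of a "{b, c}"] by simp

lemma mult_mono_right: "b \<le> c \<Longrightarrow> mult a b \<le> mult a c"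
  by (metis mult_sup sup.absorb_iff2)

lemma mult_mono_left: "b \<le> c \<Longrightarrow> mult b a \<le> mult c a"
  using mult_mono_right mult_commute by metis

lemma mult_le_right: "mult a b \<le> b"
  using mult_mono_left[of a top b] by simp

lemma mult_le_left: "mult a b \<le> a"
  using mult_le_right mult_commute by metis

lemma res_mult_le: "mult (res mult y x) x \<le> y"
proof -
  have "mult (res mult y x) x = mult x (Sup {a. mult a x \<le> y})"
    by (simp add: res_def mult_commute)
  also have "\<dots> = Sup (mult x ` {a. mult a x \<le> y})"
    by (rule mult_Sup)
  also have "\<dots> \<le> y"
    by (auto intro!: Sup_least simp: mult_commute)
  finally show ?thesis .
qed

lemma le_res_iff: "a \<le> res mult y x \<longleftrightarrow> mult a x \<le> y"
proof
  show "a \<le> res mult y x \<Longrightarrow> mult a x \<le> y"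
    using mult_mono_left res_mult_le order_trans by blast
  show "mult a x \<le> y \<Longrightarrow> a \<le> res mult y x"
    unfolding res_def by (rule Sup_upper) simp
qed

lemma res_mono:
  assumes "y \<le> y'"
  shows "res mult y x \<le> res mult y' x"
  using order_trans[OF res_mult_le assms] by (simp add: le_res_iff)

lemma res_antimono:
  assumes "x \<le> x'"
  shows "res mult y x' \<le> res mult y x"
proof -
  have "mult (res mult y x') x \<le> mult (res mult y x') x'"
    using assms by (rule mult_mono_right)
  then show ?thesis
    using res_mult_le order_trans le_res_iff by blast
qed

lemma principal_inf_eq:
  assumes "lat_principal mult x"
  shows "inf y x = mult (res mult y x) x"
  using assms[unfolded lat_principal_def, rule_format, of y top] by simp

lemma maximal_imp_prime:
  assumes m: "lat_maximal m"
  shows "lat_prime mult m"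
proof -
  have "b \<le> m" if ab: "mult a b \<le> m" and a: "\<not> a \<le> m" for a b
  proof -
    have "sup m a = top"
      using m a unfolding lat_maximal_def by (metis sup.cobounded2 sup_ge1)
    then have "b = sup (mult b m) (mult b a)"
      by (metis mult_top mult_sup)
    also have "\<dots> \<le> m"
      using ab mult_le_right mult_commute by (metis le_supI)
    finally show "b \<le> m" .
  qed
  then show ?thesis
    using m by (auto simp: lat_prime_def lat_maximal_def)
qed

lemma prime_Inf_le:
  assumes q: "lat_prime mult q" and "finite F" and "Inf F \<le> q"
  shows "\<exists>t\<in>F. t \<le> q"
  using \<open>finite F\<close> \<open>Inf F \<le> q\<close>
proof (induction F rule: finite_induct)
  case empty
  then show ?case using q by (simp add: lat_prime_def top_unique)
next
  case (insert a F)
  have "mult a (Inf F) \<le> inf a (Inf F)"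
    using mult_le_left mult_le_right by simp
  also have "\<dots> \<le> q"
    using insert.prems by simp
  finally have "mult a (Inf F) \<le> q" .
  then show ?case
    using q insert.IH unfolding lat_prime_def by blast
qed

end

locale C_lattice_domain =
  fixes mult :: "'a::complete_lattice \<Rightarrow> 'a \<Rightarrow> 'a"
  assumes C_lattice: "C_lattice mult" and domain: "lat_domain mult"

sublocale C_lattice_domain \<subseteq> multiplicative_lattice
  using C_lattice by unfold_locales (simp add: C_lattice_def)

context C_lattice_domain
begin

lemma lat_compact_top: "lat_compact (top :: 'a)"
  using C_lattice by (simp add: C_lattice_def)

lemma compactly_generated: "\<exists>S. (\<forall>s\<in>S. lat_compact s) \<and> (x :: 'a) = Sup S"
  using C_lattice unfolding C_lattice_def by blast

lemma res_bot_eq: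
  assumes "x \<noteq> bot"
  shows "res mult bot x = bot"
proof -
  have "mult (res mult bot x) x \<le> bot"
    by (rule res_mult_le)
  then show ?thesis
    using domain assms unfolding lat_domain_def lat_prime_def by (metis bot_unique)
qed

lemma principal_cancel:
  assumes x: "lat_principal mult x" "x \<noteq> bot" and le: "mult a x \<le> mult b x"
  shows "a \<le> b"
proof -
  have "sup b (res mult bot x) = res mult (sup (mult b x) bot) x"
    using x(1) unfolding lat_principal_def by blast
  then have "b = res mult (mult b x) x"
    using res_bot_eq[OF x(2)] by simp
  then show ?thesis
    using le le_res_iff by metis
qed

text \<open>Every compact \<open>k \<le> x \<le> Sup S\<close> lies below \<open>inf (Sup F) x = mult (res mult (Sup F) x) x\<close>
  for a finite \<open>F \<subseteq> S\<close>; cancelling \<open>x\<close> puts the compact \<open>top\<close> below the join of these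
  residuals, hence below a single one.\<close>

lemma principal_imp_compact:
  assumes x: "lat_principal mult x"
  shows "lat_compact x"
proof (cases "x = bot")
  case True
  then show ?thesis using lat_compact_bot by simp
next
  case False
  show ?thesis
    unfolding lat_compact_def
  proof (intro allI impI)
    fix S assume "x \<le> Sup S"
    define R where "R = (\<lambda>F. res mult (Sup F) x) ` {F. F \<subseteq> S \<and> finite F}"
    obtain K where K: "\<forall>k\<in>K. lat_compact k" "x = Sup K"
      using compactly_generated by blast
    have "k \<le> mult (Sup R) x" if "k \<in> K" for k
    proof -
      have "k \<le> x" "lat_compact k"
        using K that by (auto intro: Sup_upper)
      then obtain F where F: "F \<subseteq> S" "finite F" "k \<le> Sup F"
        using \<open>x \<le> Sup S\<close> order_trans unfolding lat_compact_def by meson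
      have "k \<le> inf (Sup F) x"
        using F \<open>k \<le> x\<close> by simp
      also have "\<dots> = mult (res mult (Sup F) x) x"
        by (rule principal_inf_eq[OF x])
      also have "\<dots> \<le> mult (Sup R) x"
        using F by (auto simp: R_def intro!: mult_mono_left Sup_upper)
      finally show ?thesis .
    qed
    then have "mult top x \<le> mult (Sup R) x"
      using K(2) by (simp add: Sup_least)
    then have "top \<le> Sup R"
      by (rule principal_cancel[OF x False])
    then obtain G where "G \<subseteq> S" "finite G" "top \<le> res mult (Sup G) x"
      using lat_compact_le_Sup_finite_subsets[OF lat_compact_top, of "\<lambda>F. res mult (Sup F) x" S]
      unfolding R_def by (metis Sup_subset_mono res_mono)
    then show "\<exists>T\<subseteq>S. finite T \<and> x \<le> Sup T"
      using le_res_iff[of top] by auto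
  qed
qed

lemma maximal_separated_by_compact:
  fixes a b :: 'a
  assumes "lat_maximal a" and "lat_maximal b" and "a \<noteq> b"
  obtains t where "lat_compact t" "t \<le> a" "\<not> t \<le> b"
proof -
  obtain S where S: "\<forall>s\<in>S. lat_compact s" "a = Sup S"
    using compactly_generated by blast
  have "\<not> a \<le> b"
  proof
    assume "a \<le> b"
    then have "b = a"
      using assms(1,2) by (simp add: lat_maximal_def)
    then show False
      using assms(3) by simp
  qed
  then obtain t where "t \<in> S" "\<not> t \<le> b"
    using S(2) Sup_least by blast
  then show thesis
    using S by (intro that) (auto intro: Sup_upper)
qed

text \<open>The witness is the meet of a compact \<open>t0 \<le> m0\<close> with \<open>\<not> t0 \<le> m\<close>, taken for some other
  \<open>m0 \<in> Z\<close> and lying below all but finitely many members of \<open>Z\<close>, with one separator for each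
  of these exceptions; as \<open>m\<close> is prime, the finite meet is not below \<open>m\<close>.\<close>

lemma maximal_isolated:
  fixes Z :: "'a set"
  assumes Z: "Z \<subseteq> Collect lat_maximal" "m \<in> Z"
    and cofinite: "\<And>m s. m \<in> Z \<Longrightarrow> lat_compact s \<Longrightarrow> s \<le> m \<Longrightarrow> finite {m'\<in>Z. \<not> s \<le> m'}"
  obtains g where "\<not> g \<le> m" "\<And>m'. m' \<in> Z \<Longrightarrow> m' \<noteq> m \<Longrightarrow> g \<le> m'"
proof (cases "Z \<subseteq> {m}")
  case True
  have "\<not> top \<le> m"
    using Z by (auto simp: lat_maximal_def top_unique)
  with True show thesis
    by (intro that) auto
next
  case False
  then obtain m0 where m0: "m0 \<in> Z" "m0 \<noteq> m" by blast
  have maximal: "lat_maximal m'" if "m' \<in> Z" for m'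
    using Z that by blast
  obtain t0 where t0: "lat_compact t0" "t0 \<le> m0" "\<not> t0 \<le> m"
    using maximal_separated_by_compact[OF maximal maximal] m0 Z(2) by metis
  define E where "E = {m'\<in>Z. \<not> t0 \<le> m'} - {m}"
  have "finite E"
    unfolding E_def using cofinite[OF m0(1) t0(1,2)] by simp
  have "\<exists>t. t \<le> m' \<and> \<not> t \<le> m" if "m' \<in> Z" "m' \<noteq> m" for m'
    using maximal_separated_by_compact[OF maximal maximal] that Z(2) by metis
  then obtain sep where sep: "\<And>m'. m' \<in> Z \<Longrightarrow> m' \<noteq> m \<Longrightarrow> sep m' \<le> m' \<and> \<not> sep m' \<le> m"
    by metis
  define g where "g = Inf (insert t0 (sep ` E))"
  show thesis
  proof
    have "\<forall>t \<in> insert t0 (sep ` E). \<not> t \<le> m"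
      using t0 sep by (auto simp: E_def)
    moreover have "finite (insert t0 (sep ` E))"
      using \<open>finite E\<close> by simp
    ultimately show "\<not> g \<le> m"
      unfolding g_def using prime_Inf_le[OF maximal_imp_prime[OF maximal[OF Z(2)]]] by metis
    show "g \<le> m'" if "m' \<in> Z" "m' \<noteq> m" for m'
    proof (cases "t0 \<le> m'")
      case True
      then show ?thesis
        unfolding g_def by (meson Inf_lower insertI1 order_trans)
    next
      case False
      then have "sep m' \<in> insert t0 (sep ` E)"
        using that by (simp add: E_def)
      then have "g \<le> sep m'"
        unfolding g_def by (rule Inf_lower)
      then show ?thesis
        using sep that by (meson order_trans)
    qed
  qed
qed

lemma compacts_cofinitely_below_imp_uncountable:
  fixes Z :: "'a set"
  assumes Z: "Z \<subseteq> Collect lat_maximal" "infinite Z"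
    and cofinite: "\<And>m s. m \<in> Z \<Longrightarrow> lat_compact s \<Longrightarrow> s \<le> m \<Longrightarrow> finite {m'\<in>Z. \<not> s \<le> m'}"
  shows "uncountable (UNIV :: 'a set)"
proof -
  have "\<exists>g. \<not> g \<le> m \<and> (\<forall>m'\<in>Z. m' \<noteq> m \<longrightarrow> g \<le> m')" if "m \<in> Z" for m
    by (rule maximal_isolated[OF Z(1) that], fact cofinite, blast)
  then obtain g where g: "\<And>m. m \<in> Z \<Longrightarrow> \<not> g m \<le> m \<and> (\<forall>m'\<in>Z. m' \<noteq> m \<longrightarrow> g m \<le> m')"
    by metis
  obtain f :: "nat \<Rightarrow> 'a" where f: "inj f" "range f \<subseteq> Z"
    using infinite_countable_subset[OF Z(2)] by blast
  show ?thesis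
  proof (rule separated_sequence_imp_uncountable)
    show "\<not> g (f k) \<le> f k" for k
      using f g by blast
    show "g (f j) \<le> f k" if "j \<noteq> k" for j k
      using f g that by (metis injD range_subsetD)
  qed
qed

lemma compact_separation_of_maximal_sequence:
  fixes m s :: "nat \<Rightarrow> 'a"
  assumes m: "\<And>k. lat_maximal (m k)"
    and s: "\<And>k. lat_compact (s k)" "\<And>k. s k \<le> m k" "\<And>k j. k < j \<Longrightarrow> \<not> s k \<le> m j"
  obtains s' where "\<And>k. lat_compact (s' k)" "\<And>k. s' k \<le> m k" "\<And>j k. j \<noteq> k \<Longrightarrow> \<not> s' j \<le> m k"
proof -
  have "m j \<noteq> m k" if "j < k" for j k
    using s(2,3) that by metis
  then have sep: "\<exists>t. lat_compact t \<and> t \<le> m k \<and> \<not> t \<le> m j" if "j < k" for j k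
    using maximal_separated_by_compact[OF m m] that by metis
  define t where "t k j = (SOME t. lat_compact t \<and> t \<le> m k \<and> \<not> t \<le> m j)" for k j
  have t: "lat_compact (t k j) \<and> t k j \<le> m k \<and> \<not> t k j \<le> m j" if "j < k" for j k
    unfolding t_def using sep[OF that] by (rule someI_ex)
  define s' where "s' k = sup (s k) (Sup (t k ` {..<k}))" for k
  show thesis
  proof
    show "lat_compact (s' k)" for k
      unfolding s'_def using s(1) t by (auto intro!: lat_compact_sup lat_compact_Sup_finite)
    show "s' k \<le> m k" for k
      unfolding s'_def using s(2) t by (auto intro!: Sup_least)
    show "\<not> s' j \<le> m k" if "j \<noteq> k" for j k
    proof (cases "k < j")
      case True
      then have "t j k \<le> s' j"
        unfolding s'_def by (auto intro: Sup_upper le_supI2)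
      then show ?thesis using t[OF True] by (meson order_trans)
    next
      case False
      then have "\<not> s j \<le> m k"
        using s(3) that by simp
      then show ?thesis
        unfolding s'_def by simp
    qed
  qed
qed

lemma res_mult_le_imp_le_sup:
  assumes PD: "pseudo_Dedekind mult" and PR: "Pruefer mult"
    and p: "lat_principal mult p" "p \<noteq> bot" and s: "lat_compact s"
    and le: "mult (res mult p s) t \<le> p"
  shows "t \<le> sup p s"
proof -
  define \<beta> where "\<beta> = res mult p s"
  define u where "u = sup p s"
  have \<beta>_principal: "lat_principal mult \<beta>"
    using PD p(1) unfolding pseudo_Dedekind_def \<beta>_def by blast
  have "p \<le> \<beta>"
    unfolding \<beta>_def le_res_iff by (rule mult_le_left)
  then have \<beta>_nonzero: "\<beta> \<noteq> bot"
    using p(2) bot_unique by metis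
  have "lat_principal mult u"
    using PR lat_compact_sup[OF principal_imp_compact[OF p(1)] s]
    unfolding Pruefer_def u_def by blast
  moreover have "res mult p u = \<beta>"
    using mult_le_right[of _ p] by (simp add: \<beta>_def u_def res_def mult_sup)
  ultimately have "p = mult \<beta> u"
    using principal_inf_eq[of u p] by (simp add: u_def)
  then have "mult t \<beta> \<le> mult u \<beta>"
    using le by (simp add: \<beta>_def mult_commute)
  then show ?thesis
    unfolding u_def by (rule principal_cancel[OF \<beta>_principal \<beta>_nonzero])
qed

lemma res_not_le_Sup_res_outside:
  assumes PD: "pseudo_Dedekind mult" and PR: "Pruefer mult"
    and p: "lat_principal mult p" "p \<noteq> bot"
    and m: "lat_maximal m" "p \<le> m" and s: "lat_compact s" "s \<le> m"
  shows "\<not> res mult p s \<le> Sup (res mult p ` {t. \<not> t \<le> m})"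
proof
  assume le_Sup: "res mult p s \<le> Sup (res mult p ` {t. \<not> t \<le> m})"
  have "lat_compact (res mult p s)"
    using PD p(1) unfolding pseudo_Dedekind_def by (blast intro: principal_imp_compact)
  then obtain R where "R \<subseteq> res mult p ` {t. \<not> t \<le> m}" "finite R" "res mult p s \<le> Sup R"
    using le_Sup unfolding lat_compact_def by blast
  then obtain F where F: "F \<subseteq> {t. \<not> t \<le> m}" "finite F" "res mult p s \<le> Sup (res mult p ` F)"
    using finite_subset_image by metis
  have "Sup (res mult p ` F) \<le> res mult p (Inf F)"
    by (auto intro!: Sup_least res_antimono Inf_lower)
  then have "mult (res mult p s) (Inf F) \<le> p"
    using F(3) le_res_iff mult_commute order_trans by metis
  then have "Inf F \<le> m"
    using res_mult_le_imp_le_sup[OF PD PR p s(1)] m(2) s(2) order_trans by (metis le_sup_iff)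
  then show False
    using prime_Inf_le[OF maximal_imp_prime[OF m(1)] F(2)] F(1) by blast
qed

lemma compactly_separated_maximals_imp_uncountable:
  fixes m s :: "nat \<Rightarrow> 'a"
  assumes PD: "pseudo_Dedekind mult" and PR: "Pruefer mult"
    and p: "lat_principal mult p" "p \<noteq> bot"
    and m: "\<And>k. lat_maximal (m k)" "\<And>k. p \<le> m k"
    and s: "\<And>k. lat_compact (s k)" "\<And>k. s k \<le> m k" "\<And>j k. j \<noteq> k \<Longrightarrow> \<not> s j \<le> m k"
  shows "uncountable (UNIV :: 'a set)"
proof (rule separated_sequence_imp_uncountable)
  show "\<not> res mult p (s k) \<le> Sup (res mult p ` {t. \<not> t \<le> m k})" for k
    by (rule res_not_le_Sup_res_outside[OF PD PR p m(1,2) s(1,2)])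
  show "res mult p (s j) \<le> Sup (res mult p ` {t. \<not> t \<le> m k})" if "j \<noteq> k" for j k
    using s(3)[OF that] by (auto intro: Sup_upper)
qed

lemma finite_maximal_above_principal:
  assumes countable: "countable (UNIV :: 'a set)"
    and PD: "pseudo_Dedekind mult" and PR: "Pruefer mult"
    and p: "lat_principal mult p" "p \<noteq> bot"
  shows "finite {m. lat_maximal m \<and> p \<le> m}" (is "finite ?Y")
proof (rule ccontr)
  assume "infinite ?Y"
  show False
  proof (cases "\<forall>Z\<subseteq>?Y. infinite Z \<longrightarrow>
      (\<exists>m\<in>Z. \<exists>s. lat_compact s \<and> s \<le> m \<and> infinite {m'\<in>Z. \<not> s \<le> m'})")
    case True
    have step: "\<exists>m\<in>Z. \<exists>s. (lat_compact s \<and> s \<le> m) \<and> infinite {m'\<in>Z. \<not> (lat_compact s \<and> s \<le> m')}"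
      if Z: "Z \<subseteq> ?Y" "infinite Z" for Z
    proof -
      obtain m s where "m \<in> Z" "lat_compact s" "s \<le> m" "infinite {m'\<in>Z. \<not> s \<le> m'}"
        using True Z by meson
      then show ?thesis
        by (intro bexI[of _ m] exI[of _ s]) simp_all
    qed
    obtain m s :: "nat \<Rightarrow> 'a" where m: "range m \<subseteq> ?Y"
      and s: "\<And>k. lat_compact (s k) \<and> s k \<le> m k" "\<And>k j. k < j \<Longrightarrow> \<not> (lat_compact (s k) \<and> s k \<le> m j)"
      using greedy_separated_sequence[where Q = "\<lambda>s m. lat_compact s \<and> s \<le> m", OF \<open>infinite ?Y\<close> step] by blast
    obtain s' where "\<And>k. lat_compact (s' k)" "\<And>k. s' k \<le> m k" "\<And>j k. j \<noteq> k \<Longrightarrow> \<not> s' j \<le> m k"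
      by (rule compact_separation_of_maximal_sequence[of m s]) (use m s in auto)
    with m have "uncountable (UNIV :: 'a set)"
      by (intro compactly_separated_maximals_imp_uncountable[OF PD PR p, of m s']) auto
    with countable show False by contradiction
  next
    case False
    then obtain Z where "Z \<subseteq> ?Y" "infinite Z"
      "\<And>m s. m \<in> Z \<Longrightarrow> lat_compact s \<Longrightarrow> s \<le> m \<Longrightarrow> finite {m'\<in>Z. \<not> s \<le> m'}"
      by auto
    then have "uncountable (UNIV :: 'a set)"
      by (intro compacts_cofinitely_below_imp_uncountable) auto
    with countable show False by contradiction
  qed
qed

end

theorem proposition3p14:
  fixes mult :: "'a::complete_lattice \<Rightarrow> 'a \<Rightarrow> 'a"
  assumes "countable (UNIV :: 'a set)"
    and "C_lattice mult"
    and "lat_domain mult"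
    and "\<forall>x::'a. \<exists>S. (\<forall>s\<in>S. lat_principal mult s) \<and> x = Sup S"
    and "pseudo_Dedekind mult"
    and "Pruefer mult"
  shows "finite_character TYPE('a)"
  unfolding finite_character_def
proof (intro allI impI)
  interpret C_lattice_domain mult
    using assms(2,3) by unfold_locales
  fix x :: 'a
  assume "x \<noteq> bot"
  obtain S where S: "\<forall>s\<in>S. lat_principal mult s" "x = Sup S"
    using assms(4) by blast
  then obtain p where p: "p \<in> S" "p \<noteq> bot"
    using \<open>x \<noteq> bot\<close> Sup_bot_conv(1) by blast
  then have "finite {m. lat_maximal m \<and> p \<le> m}"
    using finite_maximal_above_principal assms(1,5,6) S(1) by blast
  moreover have "p \<le> x"
    using S(2) p(1) by (simp add: Sup_upper)
  then have "{m. lat_maximal m \<and> x \<le> m} \<subseteq> {m. lat_maximal m \<and> p \<le> m}"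
    by (auto intro: order_trans)
  ultimately show "finite {m. lat_maximal m \<and> x \<le> m}"
    by (rule rev_finite_subset)
qed

end
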